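(* Let $A$ be a category with a variance $(E,M)$, let $C$ be a category, let $F\colon A\rightarrow C$ be a functor of variance $(E,M)$, and let $(R,L)$ be a span on $A$. Assume that the products $\prod_{x} F(Lx)$ (over the objects $x$ of $R$) and $\prod_{f} F(L(f)_t)$ (over the morphisms $f$ of $R$) exist in $C$. Let $s,t\colon \prod_x F(Lx)\rightarrow \prod_f F(L(f)_t)$ be the unique morphisms such that for every morphism $f\colon x\rightarrow y$ of $R$, $$\pi_f\circ s = F(L(f)^e)\circ \pi_x,\qquad \pi_f\circ t = F(L(f)^m)\circ\pi_y .$$ Then the assignment sending an $L$-wedge $(c,(\eta_x)_x)$ to $(c,\eta')$, where $\eta'\colon c\rightarrow \prod_x F(Lx)$ is the morphism with components $\eta_x$ (and acting as the identity on underlying morphisms), is an isomorphism between the category of $L$-wedges of $F$ and the category of cones equalizing $s$ and $t$ (pairs $(c,e\colon c\rightarrow\prod_xF(Lx))$ with $se=te$, morphisms being morphisms $c\rightarrow d$ in $C$ commuting with the maps $e$). In particular, the end $\int_L F$ exists if and only if the equalizer of $s$ and $t$ exists, and in that case they agree.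
   Context: A variance on a category $A$ is a pair $(E,M)$ of subcategories containing all objects such that every morphism $f$ factors uniquely as $f=me$ and uniquely as $f=e'm'$ with $e,e'$ in $E$ and $m,m'$ in $M$. For $f\colon x\rightarrow y$ write $f=f^mf^e$ with $f^e\colon x\rightarrow f_t$ in $E$, $f^m\colon f_t\rightarrow y$ in $M$, and $f=f_ef_m$ with $f_m\colon x\rightarrow f_s$ in $M$, $f_e\colon f_s\rightarrow y$ in $E$. A functor $F\colon A\rightarrow C$ of variance $(E,M)$ assigns objects to objects and to each morphism $f$ of $A$ a morphism $F(f)\colon F(f_s)\rightarrow F(f_t)$, preserving identities and satisfying, for composable $x\xrightarrow{f}y\xrightarrow{g}z$, $F(gf)=F((g^ef^m)^e)F(f)F((g_mf_e)_m)=F((g^ef^m)^m)F(g)F((g_mf_e)_e)$. (Thus for $f\colon x\rightarrow y$ in $R$, $F(L(f)^e)\colon F(Lx)\rightarrow F(L(f)_t)$ and $F(L(f)^m)\colon F(Ly)\rightarrow F(L(f)_t)$.) A span on $A$ is a pair $(R,L)$ of a category $R$ and a functor $L\colon R\rightarrow A$. An $L$-wedge of $F$ is a pair $(c,\eta)$ where $c$ is an object of $C$ and $\eta=(\eta_x\colon c\rightarrow F(Lx))_{x\in R}$ is a family such that $F(L(f)^e)\circ\eta_x = F(L(f)^m)\circ\eta_y$ for every morphism $f\colon x\rightarrow y$ of $R$. A morphism of $L$-wedges $(c,\eta)\rightarrow(d,\theta)$ is a morphism $h\colon c\rightarrow d$ with $\theta_x\circ h=\eta_x$ for all objects $x$ of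 $R$; composition is that of $C$. The end $\int_L F$ of $F$ over $L$ is a terminal $L$-wedge. *)

theory Defs
  imports "HOL-Library.FuncSet"
begin

record ('o, 'm) cat =
  cObj  :: "'o set"
  cArr  :: "'m set"
  cDom  :: "'m \<Rightarrow> 'o"
  cCod  :: "'m \<Rightarrow> 'o"
  cId   :: "'o \<Rightarrow> 'm"
  cComp :: "'m \<Rightarrow> 'm \<Rightarrow> 'm"   (* cComp C g f = g o f *)

definition hom :: "('o,'m) cat \<Rightarrow> 'o \<Rightarrow> 'o \<Rightarrow> 'm set" where
  "hom C x y = {f \<in> cArr C. cDom C f = x \<and> cCod C f = y}"

definition category :: "('o,'m) cat \<Rightarrow> bool" where
  "category C \<longleftrightarrow>
     (\<forall>f\<in>cArr C. cDom C f \<in> cObj C \<and> cCod C f \<in> cObj C) \<and>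
     (\<forall>x\<in>cObj C. cId C x \<in> hom C x x) \<and>
     (\<forall>f\<in>cArr C. \<forall>g\<in>cArr C. cCod C f = cDom C g \<longrightarrow>
        cComp C g f \<in> hom C (cDom C f) (cCod C g)) \<and>
     (\<forall>f\<in>cArr C. cComp C f (cId C (cDom C f)) = f \<and> cComp C (cId C (cCod C f)) f = f) \<and>
     (\<forall>f\<in>cArr C. \<forall>g\<in>cArr C. \<forall>h\<in>cArr C. cCod C f = cDom C g \<longrightarrow> cCod C g = cDom C h \<longrightarrow>
        cComp C h (cComp C g f) = cComp C (cComp C h g) f)"

definition cfunctor :: "('a,'f) cat \<Rightarrow> ('b,'g) cat \<Rightarrow> ('a \<Rightarrow> 'b) \<Rightarrow> ('f \<Rightarrow> 'g) \<Rightarrow> bool" where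
  "cfunctor A B FO FM \<longleftrightarrow> category A \<and> category B \<and>
     (\<forall>x\<in>cObj A. FO x \<in> cObj B) \<and>
     (\<forall>f\<in>cArr A. FM f \<in> hom B (FO (cDom A f)) (FO (cCod A f))) \<and>
     (\<forall>x\<in>cObj A. FM (cId A x) = cId B (FO x)) \<and>
     (\<forall>f\<in>cArr A. \<forall>g\<in>cArr A. cCod A f = cDom A g \<longrightarrow>
        FM (cComp A g f) = cComp B (FM g) (FM f))"

definition iso_functor :: "('a,'f) cat \<Rightarrow> ('b,'g) cat \<Rightarrow> ('a \<Rightarrow> 'b) \<Rightarrow> ('f \<Rightarrow> 'g) \<Rightarrow> bool" where
  "iso_functor A B FO FM \<longleftrightarrow> cfunctor A B FO FM \<and>
     bij_betw FO (cObj A) (cObj B) \<and> bij_betw FM (cArr A) (cArr B)"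

definition subcat_all_obj :: "('o,'m) cat \<Rightarrow> 'm set \<Rightarrow> bool" where
  "subcat_all_obj A S \<longleftrightarrow> S \<subseteq> cArr A \<and> (\<forall>x\<in>cObj A. cId A x \<in> S) \<and>
     (\<forall>f\<in>S. \<forall>g\<in>S. cCod A f = cDom A g \<longrightarrow> cComp A g f \<in> S)"

definition is_em :: "('o,'m) cat \<Rightarrow> 'm set \<Rightarrow> 'm set \<Rightarrow> 'm \<Rightarrow> 'm \<times> 'm \<Rightarrow> bool" where
  "is_em A E M f p \<longleftrightarrow> fst p \<in> E \<and> snd p \<in> M \<and> cDom A (fst p) = cDom A f \<and>
     cCod A (fst p) = cDom A (snd p) \<and> cCod A (snd p) = cCod A f \<and> cComp A (snd p) (fst p) = f"

definition is_me :: "('o,'m) cat \<Rightarrow> 'm set \<Rightarrow> 'm set \<Rightarrow> 'm \<Rightarrow> 'm \<times> 'm \<Rightarrow> bool" where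
  "is_me A E M f p \<longleftrightarrow> fst p \<in> M \<and> snd p \<in> E \<and> cDom A (fst p) = cDom A f \<and>
     cCod A (fst p) = cDom A (snd p) \<and> cCod A (snd p) = cCod A f \<and> cComp A (snd p) (fst p) = f"

definition variance :: "('o,'m) cat \<Rightarrow> 'm set \<Rightarrow> 'm set \<Rightarrow> bool" where
  "variance A E M \<longleftrightarrow> category A \<and> subcat_all_obj A E \<and> subcat_all_obj A M \<and>
     (\<forall>f\<in>cArr A. \<exists>!p. is_em A E M f p) \<and> (\<forall>f\<in>cArr A. \<exists>!p. is_me A E M f p)"

text \<open>f = f^m f^e, f^e : x -> f_t; f = f_e f_m, f_m : x -> f_s.\<close>
definition up_e :: "('o,'m) cat \<Rightarrow> 'm set \<Rightarrow> 'm set \<Rightarrow> 'm \<Rightarrow> 'm" where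
  "up_e A E M f = fst (THE p. is_em A E M f p)"
definition up_m :: "('o,'m) cat \<Rightarrow> 'm set \<Rightarrow> 'm set \<Rightarrow> 'm \<Rightarrow> 'm" where
  "up_m A E M f = snd (THE p. is_em A E M f p)"
definition tgt :: "('o,'m) cat \<Rightarrow> 'm set \<Rightarrow> 'm set \<Rightarrow> 'm \<Rightarrow> 'o" where
  "tgt A E M f = cCod A (up_e A E M f)"
definition lo_m :: "('o,'m) cat \<Rightarrow> 'm set \<Rightarrow> 'm set \<Rightarrow> 'm \<Rightarrow> 'm" where
  "lo_m A E M f = fst (THE p. is_me A E M f p)"
definition lo_e :: "('o,'m) cat \<Rightarrow> 'm set \<Rightarrow> 'm set \<Rightarrow> 'm \<Rightarrow> 'm" where
  "lo_e A E M f = snd (THE p. is_me A E M f p)"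
definition src :: "('o,'m) cat \<Rightarrow> 'm set \<Rightarrow> 'm set \<Rightarrow> 'm \<Rightarrow> 'o" where
  "src A E M f = cCod A (lo_m A E M f)"

definition var_functor ::
  "('a,'f) cat \<Rightarrow> 'f set \<Rightarrow> 'f set \<Rightarrow> ('c,'g) cat \<Rightarrow> ('a \<Rightarrow> 'c) \<Rightarrow> ('f \<Rightarrow> 'g) \<Rightarrow> bool" where
  "var_functor A E M C FO FM \<longleftrightarrow> variance A E M \<and> category C \<and>
     (\<forall>x\<in>cObj A. FO x \<in> cObj C) \<and>
     (\<forall>f\<in>cArr A. FM f \<in> hom C (FO (src A E M f)) (FO (tgt A E M f))) \<and>
     (\<forall>x\<in>cObj A. FM (cId A x) = cId C (FO x)) \<and>
     (\<forall>f\<in>cArr A. \<forall>g\<in>cArr A. cCod A f = cDom A g \<longrightarrow>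
        FM (cComp A g f) =
          cComp C (FM (up_e A E M (cComp A (up_e A E M g) (up_m A E M f))))
            (cComp C (FM f) (FM (lo_m A E M (cComp A (lo_m A E M g) (lo_e A E M f))))) \<and>
        FM (cComp A g f) =
          cComp C (FM (up_m A E M (cComp A (up_e A E M g) (up_m A E M f))))
            (cComp C (FM g) (FM (lo_e A E M (cComp A (lo_m A E M g) (lo_e A E M f))))))"

definition is_wedge ::
  "('a,'f) cat \<Rightarrow> 'f set \<Rightarrow> 'f set \<Rightarrow> ('c,'g) cat \<Rightarrow> ('a \<Rightarrow> 'c) \<Rightarrow> ('f \<Rightarrow> 'g) \<Rightarrow>
   ('r,'h) cat \<Rightarrow> ('r \<Rightarrow> 'a) \<Rightarrow> ('h \<Rightarrow> 'f) \<Rightarrow> 'c \<Rightarrow> ('r \<Rightarrow> 'g) \<Rightarrow> bool" where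
  "is_wedge A E M C FO FM R LO LM c \<eta> \<longleftrightarrow> c \<in> cObj C \<and>
     (\<forall>x\<in>cObj R. \<eta> x \<in> hom C c (FO (LO x))) \<and>
     (\<forall>f\<in>cArr R. cComp C (FM (up_e A E M (LM f))) (\<eta> (cDom R f)) =
                  cComp C (FM (up_m A E M (LM f))) (\<eta> (cCod R f)))"

definition is_end ::
  "('a,'f) cat \<Rightarrow> 'f set \<Rightarrow> 'f set \<Rightarrow> ('c,'g) cat \<Rightarrow> ('a \<Rightarrow> 'c) \<Rightarrow> ('f \<Rightarrow> 'g) \<Rightarrow>
   ('r,'h) cat \<Rightarrow> ('r \<Rightarrow> 'a) \<Rightarrow> ('h \<Rightarrow> 'f) \<Rightarrow> 'c \<Rightarrow> ('r \<Rightarrow> 'g) \<Rightarrow> bool" where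
  "is_end A E M C FO FM R LO LM c \<eta> \<longleftrightarrow> is_wedge A E M C FO FM R LO LM c \<eta> \<and>
     (\<forall>d \<theta>. is_wedge A E M C FO FM R LO LM d \<theta> \<longrightarrow>
        (\<exists>!h. h \<in> hom C d c \<and> (\<forall>x\<in>cObj R. cComp C (\<eta> x) h = \<theta> x)))"

text \<open>The category of L-wedges; families are indexed by the objects of R
  (represented as extensional functions on cObj R). Arrows are triples (source, target, h).\<close>
definition wedge_cat ::
  "('a,'f) cat \<Rightarrow> 'f set \<Rightarrow> 'f set \<Rightarrow> ('c,'g) cat \<Rightarrow> ('a \<Rightarrow> 'c) \<Rightarrow> ('f \<Rightarrow> 'g) \<Rightarrow>
   ('r,'h) cat \<Rightarrow> ('r \<Rightarrow> 'a) \<Rightarrow> ('h \<Rightarrow> 'f) \<Rightarrow>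
   ('c \<times> ('r \<Rightarrow> 'g), ('c \<times> ('r \<Rightarrow> 'g)) \<times> ('c \<times> ('r \<Rightarrow> 'g)) \<times> 'g) cat" where
  "wedge_cat A E M C FO FM R LO LM =
     (let W = {w. is_wedge A E M C FO FM R LO LM (fst w) (snd w) \<and> snd w \<in> extensional (cObj R)} in
     \<lparr> cObj = W,
       cArr = {(u, v, h). u \<in> W \<and> v \<in> W \<and> h \<in> hom C (fst u) (fst v) \<and>
                          (\<forall>x\<in>cObj R. cComp C (snd v x) h = snd u x)},
       cDom = (\<lambda>(u, v, h). u),
       cCod = (\<lambda>(u, v, h). v),
       cId = (\<lambda>u. (u, u, cId C (fst u))),
       cComp = (\<lambda>(v', w, k) (u, v, h). (u, w, cComp C k h)) \<rparr>)"

definition is_product :: "('c,'g) cat \<Rightarrow> 'i set \<Rightarrow> 'c \<Rightarrow> ('i \<Rightarrow> 'g) \<Rightarrow> ('i \<Rightarrow> 'c) \<Rightarrow> bool" where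
  "is_product C I P \<pi> X \<longleftrightarrow> P \<in> cObj C \<and> (\<forall>i\<in>I. \<pi> i \<in> hom C P (X i)) \<and>
     (\<forall>d\<in>cObj C. \<forall>\<phi>. (\<forall>i\<in>I. \<phi> i \<in> hom C d (X i)) \<longrightarrow>
        (\<exists>!h. h \<in> hom C d P \<and> (\<forall>i\<in>I. cComp C (\<pi> i) h = \<phi> i)))"

definition tuple :: "('c,'g) cat \<Rightarrow> 'i set \<Rightarrow> 'c \<Rightarrow> ('i \<Rightarrow> 'g) \<Rightarrow> 'c \<Rightarrow> ('i \<Rightarrow> 'g) \<Rightarrow> 'g" where
  "tuple C I P \<pi> d \<phi> = (THE h. h \<in> hom C d P \<and> (\<forall>i\<in>I. cComp C (\<pi> i) h = \<phi> i))"

definition cone_cat :: "('c,'g) cat \<Rightarrow> 'c \<Rightarrow> 'g \<Rightarrow> 'g \<Rightarrow> ('c \<times> 'g, ('c \<times> 'g) \<times> ('c \<times> 'g) \<times> 'g) cat" where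
  "cone_cat C P s t =
     (let K = {u. fst u \<in> cObj C \<and> snd u \<in> hom C (fst u) P \<and> cComp C s (snd u) = cComp C t (snd u)} in
     \<lparr> cObj = K,
       cArr = {(u, v, h). u \<in> K \<and> v \<in> K \<and> h \<in> hom C (fst u) (fst v) \<and> cComp C (snd v) h = snd u},
       cDom = (\<lambda>(u, v, h). u),
       cCod = (\<lambda>(u, v, h). v),
       cId = (\<lambda>u. (u, u, cId C (fst u))),
       cComp = (\<lambda>(v', w, k) (u, v, h). (u, w, cComp C k h)) \<rparr>)"

definition is_equalizer :: "('c,'g) cat \<Rightarrow> 'c \<Rightarrow> 'g \<Rightarrow> 'g \<Rightarrow> 'c \<Rightarrow> 'g \<Rightarrow> bool" where
  "is_equalizer C P s t c e \<longleftrightarrow> c \<in> cObj C \<and> e \<in> hom C c P \<and> cComp C s e = cComp C t e \<and>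
     (\<forall>d e'. d \<in> cObj C \<and> e' \<in> hom C d P \<and> cComp C s e' = cComp C t e' \<longrightarrow>
        (\<exists>!h. h \<in> hom C d c \<and> cComp C e h = e'))"

end

theory Submission
  imports Defs
begin

text \<open>A family of arrows \<open>\<eta>\<^sub>x : c \<rightarrow> F(Lx)\<close> is the same as a single arrow
  \<open>\<eta>' : c \<rightarrow> \<Prod>\<^sub>x F(Lx)\<close>. Arrows into \<open>\<Prod>\<^sub>f F(L(f)\<^sub>t)\<close> are determined by their
  components, and the \<open>f\<close>-th components of \<open>s \<eta>'\<close> and \<open>t \<eta>'\<close> are the two sides of the wedge
  condition at \<open>f\<close>; so wedges are exactly the cones equalizing \<open>s\<close> and \<open>t\<close>. For the same reason an
  arrow commutes with two families iff it commutes with their tuples, so this correspondence is an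
  isomorphism of categories, and it matches the terminal objects: the end and the equalizer.\<close>

lemma cat_hom_obj: "category C \<Longrightarrow> f \<in> hom C a b \<Longrightarrow> a \<in> cObj C \<and> b \<in> cObj C"
  by (auto simp: category_def hom_def)

lemma cat_id_hom: "category C \<Longrightarrow> x \<in> cObj C \<Longrightarrow> cId C x \<in> hom C x x"
  by (auto simp: category_def)

lemma cat_comp_hom: "category C \<Longrightarrow> f \<in> hom C a b \<Longrightarrow> g \<in> hom C b c \<Longrightarrow> cComp C g f \<in> hom C a c"
  by (auto simp: category_def hom_def)

lemma cat_comp_assoc:
  "category C \<Longrightarrow> f \<in> hom C a b \<Longrightarrow> g \<in> hom C b c \<Longrightarrow> h \<in> hom C c d \<Longrightarrow>
   cComp C h (cComp C g f) = cComp C (cComp C h g) f"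
  by (auto simp: category_def hom_def)

lemma cat_id_left: "category C \<Longrightarrow> f \<in> hom C a b \<Longrightarrow> cComp C (cId C b) f = f"
  by (auto simp: category_def hom_def)

lemma cat_id_right: "category C \<Longrightarrow> f \<in> hom C a b \<Longrightarrow> cComp C f (cId C a) = f"
  by (auto simp: category_def hom_def)

text \<open>Objects of \<open>C\<close> carrying extra data, with those \<open>C\<close>-arrows that respect the data;
  the categories of wedges and of equalizing cones are both of this shape.\<close>
definition structured_cat ::
  "('c,'g) cat \<Rightarrow> ('c \<times> 'd) set \<Rightarrow> ('c \<times> 'd \<Rightarrow> 'c \<times> 'd \<Rightarrow> 'g \<Rightarrow> bool) \<Rightarrow>
   ('c \<times> 'd, ('c \<times> 'd) \<times> ('c \<times> 'd) \<times> 'g) cat" where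
  "structured_cat C Ob adm =
     \<lparr> cObj = Ob,
       cArr = {(u, v, h). u \<in> Ob \<and> v \<in> Ob \<and> h \<in> hom C (fst u) (fst v) \<and> adm u v h},
       cDom = (\<lambda>(u, v, h). u),
       cCod = (\<lambda>(u, v, h). v),
       cId = (\<lambda>u. (u, u, cId C (fst u))),
       cComp = (\<lambda>(v', w, k) (u, v, h). (u, w, cComp C k h)) \<rparr>"

lemma category_structured_cat:
  assumes C: "category C" and Ob: "\<And>u. u \<in> Ob \<Longrightarrow> fst u \<in> cObj C"
    and adm_id: "\<And>u. u \<in> Ob \<Longrightarrow> adm u u (cId C (fst u))"
    and adm_comp: "\<And>u v w h k. u \<in> Ob \<Longrightarrow> v \<in> Ob \<Longrightarrow> w \<in> Ob \<Longrightarrow>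
      h \<in> hom C (fst u) (fst v) \<Longrightarrow> k \<in> hom C (fst v) (fst w) \<Longrightarrow>
      adm u v h \<Longrightarrow> adm v w k \<Longrightarrow> adm u w (cComp C k h)"
  shows "category (structured_cat C Ob adm)"
  unfolding category_def structured_cat_def
  using cat_id_hom[OF C Ob] adm_id cat_comp_hom[OF C] adm_comp
    cat_id_left[OF C] cat_id_right[OF C] cat_comp_assoc[OF C]
  by (auto simp: hom_def split: prod.splits)

lemma iso_functor_structured_cat:
  assumes cat: "category (structured_cat C Ob adm)" "category (structured_cat C Ob' adm')"
    and bij: "bij_betw \<Phi> Ob Ob'" and fst_\<Phi>: "\<And>u. u \<in> Ob \<Longrightarrow> fst (\<Phi> u) = fst u"
    and adm_\<Phi>: "\<And>u v h. u \<in> Ob \<Longrightarrow> v \<in> Ob \<Longrightarrow> h \<in> hom C (fst u) (fst v) \<Longrightarrow>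
      adm' (\<Phi> u) (\<Phi> v) h \<longleftrightarrow> adm u v h"
  shows "iso_functor (structured_cat C Ob adm) (structured_cat C Ob' adm')
    \<Phi> (\<lambda>(u, v, h). (\<Phi> u, \<Phi> v, h))"
proof -
  define \<Psi> where "\<Psi> = the_inv_into Ob \<Phi>"
  have \<Phi>_in: "\<Phi> u \<in> Ob'" if "u \<in> Ob" for u
    using bij that by (auto simp: bij_betw_def)
  have \<Psi>_in: "\<Psi> u' \<in> Ob" and \<Phi>_\<Psi>: "\<Phi> (\<Psi> u') = u'" if "u' \<in> Ob'" for u'
    using bij that by (auto simp: \<Psi>_def bij_betw_def the_inv_into_into f_the_inv_into_f)
  have \<Psi>_\<Phi>: "\<Psi> (\<Phi> u) = u" if "u \<in> Ob" for u
    using bij that by (auto simp: \<Psi>_def bij_betw_def the_inv_into_f_f)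
  have fst_\<Psi>: "fst (\<Psi> u') = fst u'" if "u' \<in> Ob'" for u'
    using fst_\<Phi> \<Psi>_in \<Phi>_\<Psi> that by metis
  have adm_\<Psi>: "adm (\<Psi> u') (\<Psi> v') h \<longleftrightarrow> adm' u' v' h"
    if "u' \<in> Ob'" "v' \<in> Ob'" "h \<in> hom C (fst u') (fst v')" for u' v' h
    using adm_\<Phi>[of "\<Psi> u'" "\<Psi> v'" h] \<Psi>_in \<Phi>_\<Psi> fst_\<Psi> that by simp
  have arr: "bij_betw (\<lambda>(u, v, h). (\<Phi> u, \<Phi> v, h)) (cArr (structured_cat C Ob adm))
      (cArr (structured_cat C Ob' adm'))"
    by (rule bij_betw_byWitness[where f' = "\<lambda>(u', v', h). (\<Psi> u', \<Psi> v', h)"])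
      (use \<Phi>_in \<Psi>_in \<Phi>_\<Psi> \<Psi>_\<Phi> fst_\<Phi> fst_\<Psi> adm_\<Phi> adm_\<Psi> in \<open>auto simp: structured_cat_def\<close>)
  show ?thesis
    unfolding iso_functor_def cfunctor_def
    using cat bij arr \<Phi>_in fst_\<Phi> adm_\<Phi> by (auto simp: structured_cat_def hom_def)
qed

lemma product_proj_hom: "is_product C I P \<pi> X \<Longrightarrow> i \<in> I \<Longrightarrow> \<pi> i \<in> hom C P (X i)"
  by (simp add: is_product_def)

lemma product_universal:
  assumes "is_product C I P \<pi> X" "d \<in> cObj C" "\<And>i. i \<in> I \<Longrightarrow> \<phi> i \<in> hom C d (X i)"
  shows "\<exists>!h. h \<in> hom C d P \<and> (\<forall>i\<in>I. cComp C (\<pi> i) h = \<phi> i)"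
  using assms(1)[unfolded is_product_def, THEN conjunct2, THEN conjunct2, rule_format, OF assms(2)]
    assms(3) by blast

lemma product_arr_eqI:
  assumes C: "category C" and prod: "is_product C I P \<pi> X"
    and h: "h \<in> hom C d P" and h': "h' \<in> hom C d P"
    and comp: "\<And>i. i \<in> I \<Longrightarrow> cComp C (\<pi> i) h = cComp C (\<pi> i) h'"
  shows "h = h'"
proof -
  have ex: "\<exists>!k. k \<in> hom C d P \<and> (\<forall>i\<in>I. cComp C (\<pi> i) k = cComp C (\<pi> i) h)"
    by (rule product_universal[OF prod])
      (use cat_hom_obj[OF C h] cat_comp_hom[OF C h product_proj_hom[OF prod]] in auto)
  then show ?thesis
    using the1_equality[OF ex, of h] the1_equality[OF ex, of h'] h h' comp by simp
qed

lemma tuple_hom_proj: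
  assumes prod: "is_product C I P \<pi> X" and d: "d \<in> cObj C"
    and \<phi>: "\<And>i. i \<in> I \<Longrightarrow> \<phi> i \<in> hom C d (X i)"
  shows "tuple C I P \<pi> d \<phi> \<in> hom C d P"
    and "\<And>i. i \<in> I \<Longrightarrow> cComp C (\<pi> i) (tuple C I P \<pi> d \<phi>) = \<phi> i"
  using theI'[OF product_universal[OF prod d \<phi>]] unfolding tuple_def by auto

lemma tuple_unique:
  assumes C: "category C" and prod: "is_product C I P \<pi> X"
    and h: "h \<in> hom C d P" and \<phi>: "\<And>i. i \<in> I \<Longrightarrow> cComp C (\<pi> i) h = \<phi> i"
  shows "tuple C I P \<pi> d \<phi> = h"
proof -
  have "\<phi> i \<in> hom C d (X i)" if "i \<in> I" for i
    using \<phi>[OF that] cat_comp_hom[OF C h product_proj_hom[OF prod that]] by simp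
  note tuple = tuple_hom_proj[OF prod conjunct1[OF cat_hom_obj[OF C h]] this]
  show ?thesis by (rule product_arr_eqI[OF C prod tuple(1) h]) (use tuple(2) \<phi> in auto)
qed

lemma is_em_up_factors:
  assumes "variance A E M" "f \<in> cArr A"
  shows "is_em A E M f (up_e A E M f, up_m A E M f)"
proof -
  have "\<exists>!p. is_em A E M f p" using assms by (simp add: variance_def)
  from theI'[OF this] show ?thesis by (simp add: up_e_def up_m_def)
qed

lemma up_factors_eq:
  assumes "variance A E M" "f \<in> cArr A" "is_em A E M f p"
  shows "(up_e A E M f, up_m A E M f) = p"
proof -
  have "\<exists>!p. is_em A E M f p" using assms by (simp add: variance_def)
  from the1_equality[OF this assms(3)] show ?thesis by (simp add: up_e_def up_m_def)
qed

lemma lo_factors_eq: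
  assumes "variance A E M" "f \<in> cArr A" "is_me A E M f p"
  shows "(lo_m A E M f, lo_e A E M f) = p"
proof -
  have "\<exists>!p. is_me A E M f p" using assms by (simp add: variance_def)
  from the1_equality[OF this assms(3)] show ?thesis by (simp add: lo_m_def lo_e_def)
qed

lemma variance_id:
  assumes "variance A E M" "x \<in> cObj A"
  shows "cId A x \<in> E" "cId A x \<in> M" "cId A x \<in> hom A x x"
  using assms by (auto simp: variance_def subcat_all_obj_def category_def)

lemma variance_arr:
  assumes "variance A E M"
  shows "category A" "E \<subseteq> cArr A" "M \<subseteq> cArr A"
  using assms by (auto simp: variance_def subcat_all_obj_def)

lemma src_E:
  assumes V: "variance A E M" and e: "e \<in> E"
  shows "src A E M e = cDom A e"
proof -
  note A = variance_arr[OF V]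
  have e_hom: "e \<in> hom A (cDom A e) (cCod A e)" using A e by (auto simp: hom_def)
  have "is_me A E M e (cId A (cDom A e), e)"
    using e variance_id[OF V] cat_id_right[OF A(1) e_hom] cat_hom_obj[OF A(1) e_hom]
    by (auto simp: is_me_def hom_def)
  with lo_factors_eq[OF V] e_hom show ?thesis
    using variance_id[OF V] cat_hom_obj[OF A(1) e_hom] by (auto simp: src_def hom_def)
qed

lemma tgt_E:
  assumes V: "variance A E M" and e: "e \<in> E"
  shows "tgt A E M e = cCod A e"
proof -
  note A = variance_arr[OF V]
  have e_hom: "e \<in> hom A (cDom A e) (cCod A e)" using A e by (auto simp: hom_def)
  have "is_em A E M e (e, cId A (cCod A e))"
    using e variance_id[OF V] cat_id_left[OF A(1) e_hom] cat_hom_obj[OF A(1) e_hom]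
    by (auto simp: is_em_def hom_def)
  with up_factors_eq[OF V] e_hom show ?thesis by (auto simp: tgt_def hom_def)
qed

lemma src_M:
  assumes V: "variance A E M" and m: "m \<in> M"
  shows "src A E M m = cCod A m"
proof -
  note A = variance_arr[OF V]
  have m_hom: "m \<in> hom A (cDom A m) (cCod A m)" using A m by (auto simp: hom_def)
  have "is_me A E M m (m, cId A (cCod A m))"
    using m variance_id[OF V] cat_id_left[OF A(1) m_hom] cat_hom_obj[OF A(1) m_hom]
    by (auto simp: is_me_def hom_def)
  with lo_factors_eq[OF V] m_hom show ?thesis by (auto simp: src_def hom_def)
qed

lemma tgt_M:
  assumes V: "variance A E M" and m: "m \<in> M"
  shows "tgt A E M m = cDom A m"
proof -
  note A = variance_arr[OF V]
  have m_hom: "m \<in> hom A (cDom A m) (cCod A m)" using A m by (auto simp: hom_def)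
  have "is_em A E M m (cId A (cDom A m), m)"
    using m variance_id[OF V] cat_id_right[OF A(1) m_hom] cat_hom_obj[OF A(1) m_hom]
    by (auto simp: is_em_def hom_def)
  with up_factors_eq[OF V] m_hom show ?thesis
    using variance_id[OF V] cat_hom_obj[OF A(1) m_hom] by (auto simp: tgt_def hom_def)
qed

lemma var_functor_hom:
  "var_functor A E M C FO FM \<Longrightarrow> f \<in> cArr A \<Longrightarrow> FM f \<in> hom C (FO (src A E M f)) (FO (tgt A E M f))"
  by (simp add: var_functor_def)

lemma var_functor_up_e_hom:
  assumes F: "var_functor A E M C FO FM" and f: "f \<in> cArr A"
  shows "FM (up_e A E M f) \<in> hom C (FO (cDom A f)) (FO (tgt A E M f))"
proof -
  have V: "variance A E M" using F by (simp add: var_functor_def)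
  note em = is_em_up_factors[OF V f]
  have in_E: "up_e A E M f \<in> E" using em by (simp add: is_em_def)
  then have "up_e A E M f \<in> cArr A" using variance_arr[OF V] by blast
  from var_functor_hom[OF F this]
  have "FM (up_e A E M f) \<in> hom C (FO (cDom A (up_e A E M f))) (FO (cCod A (up_e A E M f)))"
    by (simp add: src_E[OF V in_E] tgt_E[OF V in_E])
  then show ?thesis using em by (simp add: is_em_def tgt_def)
qed

lemma var_functor_up_m_hom:
  assumes F: "var_functor A E M C FO FM" and f: "f \<in> cArr A"
  shows "FM (up_m A E M f) \<in> hom C (FO (cCod A f)) (FO (tgt A E M f))"
proof -
  have V: "variance A E M" using F by (simp add: var_functor_def)
  note em = is_em_up_factors[OF V f]
  have in_M: "up_m A E M f \<in> M" using em by (simp add: is_em_def)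
  then have "up_m A E M f \<in> cArr A" using variance_arr[OF V] by blast
  from var_functor_hom[OF F this]
  have "FM (up_m A E M f) \<in> hom C (FO (cCod A (up_m A E M f))) (FO (cDom A (up_m A E M f)))"
    by (simp add: src_M[OF V in_M] tgt_M[OF V in_M])
  then show ?thesis using em by (simp add: is_em_def tgt_def)
qed

locale wedges_as_cones =
  fixes A :: "('a, 'f) cat" and E M :: "'f set"
    and C :: "('c, 'g) cat" and FO :: "'a \<Rightarrow> 'c" and FM :: "'f \<Rightarrow> 'g"
    and R :: "('r, 'h) cat" and LO :: "'r \<Rightarrow> 'a" and LM :: "'h \<Rightarrow> 'f"
    and P Q :: 'c and \<pi> :: "'r \<Rightarrow> 'g" and \<rho> :: "'h \<Rightarrow> 'g" and s t :: 'g
  assumes F: "var_functor A E M C FO FM"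
    and L: "cfunctor R A LO LM"
    and prodP: "is_product C (cObj R) P \<pi> (\<lambda>x. FO (LO x))"
    and prodQ: "is_product C (cArr R) Q \<rho> (\<lambda>f. FO (tgt A E M (LM f)))"
    and s: "s \<in> hom C P Q" and t: "t \<in> hom C P Q"
    and s_comp: "\<forall>f\<in>cArr R. cComp C (\<rho> f) s = cComp C (FM (up_e A E M (LM f))) (\<pi> (cDom R f))"
    and t_comp: "\<forall>f\<in>cArr R. cComp C (\<rho> f) t = cComp C (FM (up_m A E M (LM f))) (\<pi> (cCod R f))"
begin

lemma catC: "category C"
  using F by (simp add: var_functor_def)

lemma dom_cod_in_obj: "f \<in> cArr R \<Longrightarrow> cDom R f \<in> cObj R \<and> cCod R f \<in> cObj R"
  using L by (simp add: cfunctor_def category_def)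

lemma FM_up_e_LM_hom:
  "f \<in> cArr R \<Longrightarrow> FM (up_e A E M (LM f)) \<in> hom C (FO (LO (cDom R f))) (FO (tgt A E M (LM f)))"
  using L var_functor_up_e_hom[OF F] by (simp add: cfunctor_def hom_def)

lemma FM_up_m_LM_hom:
  "f \<in> cArr R \<Longrightarrow> FM (up_m A E M (LM f)) \<in> hom C (FO (LO (cCod R f))) (FO (tgt A E M (LM f)))"
  using L var_functor_up_m_hom[OF F] by (simp add: cfunctor_def hom_def)

lemma is_wedge_cong:
  "(\<And>x. x \<in> cObj R \<Longrightarrow> \<eta> x = \<eta>' x) \<Longrightarrow>
   is_wedge A E M C FO FM R LO LM c \<eta> \<longleftrightarrow> is_wedge A E M C FO FM R LO LM c \<eta>'"
  using dom_cod_in_obj by (simp add: is_wedge_def)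

lemma is_wedge_comp_proj_iff:
  assumes c: "c \<in> cObj C" and e: "e \<in> hom C c P"
  shows "is_wedge A E M C FO FM R LO LM c (\<lambda>x. cComp C (\<pi> x) e) \<longleftrightarrow> cComp C s e = cComp C t e"
proof -
  note \<pi> = product_proj_hom[OF prodP] and \<rho> = product_proj_hom[OF prodQ]
  have "cComp C (FM (up_e A E M (LM f))) (cComp C (\<pi> (cDom R f)) e) = cComp C (\<rho> f) (cComp C s e)"
    and "cComp C (FM (up_m A E M (LM f))) (cComp C (\<pi> (cCod R f)) e) = cComp C (\<rho> f) (cComp C t e)"
    if f: "f \<in> cArr R" for f
    using f s_comp t_comp dom_cod_in_obj[OF f] FM_up_e_LM_hom[OF f] FM_up_m_LM_hom[OF f] \<rho>[OF f]
      cat_comp_assoc[OF catC e \<pi>] cat_comp_assoc[OF catC e s] cat_comp_assoc[OF catC e t]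
    by simp_all
  moreover have "cComp C (\<pi> x) e \<in> hom C c (FO (LO x))" if "x \<in> cObj R" for x
    using cat_comp_hom[OF catC e \<pi>[OF that]] .
  ultimately have "is_wedge A E M C FO FM R LO LM c (\<lambda>x. cComp C (\<pi> x) e) \<longleftrightarrow>
      (\<forall>f\<in>cArr R. cComp C (\<rho> f) (cComp C s e) = cComp C (\<rho> f) (cComp C t e))"
    using c by (simp add: is_wedge_def)
  also have "\<dots> \<longleftrightarrow> cComp C s e = cComp C t e"
    using product_arr_eqI[OF catC prodQ cat_comp_hom[OF catC e s] cat_comp_hom[OF catC e t]] by auto
  finally show ?thesis .
qed

abbreviation tup :: "'c \<Rightarrow> ('r \<Rightarrow> 'g) \<Rightarrow> 'g" where
  "tup c \<eta> \<equiv> tuple C (cObj R) P \<pi> c \<eta>"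

lemma is_wedge_tuple:
  assumes w: "is_wedge A E M C FO FM R LO LM c \<eta>"
  shows "tup c \<eta> \<in> hom C c P"
    and "\<And>x. x \<in> cObj R \<Longrightarrow> cComp C (\<pi> x) (tup c \<eta>) = \<eta> x"
    and "cComp C s (tup c \<eta>) = cComp C t (tup c \<eta>)"
proof -
  have c: "c \<in> cObj C" using w by (simp add: is_wedge_def)
  show hom: "tup c \<eta> \<in> hom C c P"
    and proj: "\<And>x. x \<in> cObj R \<Longrightarrow> cComp C (\<pi> x) (tup c \<eta>) = \<eta> x"
    using tuple_hom_proj[OF prodP c] w by (simp_all add: is_wedge_def)
  show "cComp C s (tup c \<eta>) = cComp C t (tup c \<eta>)"
    using is_wedge_comp_proj_iff[OF c hom] is_wedge_cong[of "\<lambda>x. cComp C (\<pi> x) (tup c \<eta>)" \<eta>]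
      proj w by simp
qed

lemma tuple_comp_eq_iff:
  assumes w: "is_wedge A E M C FO FM R LO LM c \<eta>" and h: "h \<in> hom C d c" and e: "e \<in> hom C d P"
  shows "cComp C (tup c \<eta>) h = e \<longleftrightarrow> (\<forall>x\<in>cObj R. cComp C (\<eta> x) h = cComp C (\<pi> x) e)"
proof -
  note tuple = is_wedge_tuple[OF w]
  have proj: "cComp C (\<pi> x) (cComp C (tup c \<eta>) h) = cComp C (\<eta> x) h" if "x \<in> cObj R" for x
    using cat_comp_assoc[OF catC h tuple(1) product_proj_hom[OF prodP that]] tuple(2)[OF that] by simp
  show ?thesis
    using proj product_arr_eqI[OF catC prodP cat_comp_hom[OF catC h tuple(1)] e] by auto
qed

lemma is_end_iff_is_equalizer_tuple:
  assumes w: "is_wedge A E M C FO FM R LO LM c \<eta>"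
  shows "is_end A E M C FO FM R LO LM c \<eta> \<longleftrightarrow> is_equalizer C P s t c (tup c \<eta>)"
proof
  assume en: "is_end A E M C FO FM R LO LM c \<eta>"
  have "\<exists>!h. h \<in> hom C d c \<and> cComp C (tup c \<eta>) h = e"
    if d: "d \<in> cObj C" and e: "e \<in> hom C d P" and se: "cComp C s e = cComp C t e" for d e
  proof -
    have "is_wedge A E M C FO FM R LO LM d (\<lambda>x. cComp C (\<pi> x) e)"
      using is_wedge_comp_proj_iff[OF d e] se by simp
    then have "\<exists>!h. h \<in> hom C d c \<and> (\<forall>x\<in>cObj R. cComp C (\<eta> x) h = cComp C (\<pi> x) e)"
      using en by (simp add: is_end_def)
    then show ?thesis using tuple_comp_eq_iff[OF w _ e] by (metis (no_types, lifting))
  qed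
  then show "is_equalizer C P s t c (tup c \<eta>)"
    using w is_wedge_tuple[OF w] by (simp add: is_equalizer_def is_wedge_def)
next
  assume eq: "is_equalizer C P s t c (tup c \<eta>)"
  have "\<exists>!h. h \<in> hom C d c \<and> (\<forall>x\<in>cObj R. cComp C (\<eta> x) h = \<theta> x)"
    if w': "is_wedge A E M C FO FM R LO LM d \<theta>" for d \<theta>
  proof -
    note tuple' = is_wedge_tuple[OF w']
    have "d \<in> cObj C" using w' by (simp add: is_wedge_def)
    then have "\<exists>!h. h \<in> hom C d c \<and> cComp C (tup c \<eta>) h = tup d \<theta>"
      using eq tuple'(1,3) by (simp add: is_equalizer_def)
    then show ?thesis
      using tuple_comp_eq_iff[OF w _ tuple'(1)] tuple'(2) by (metis (no_types, lifting))
  qed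
  then show "is_end A E M C FO FM R LO LM c \<eta>"
    using w by (simp add: is_end_def)
qed

lemma is_end_comp_proj:
  assumes eq: "is_equalizer C P s t c e"
  shows "is_end A E M C FO FM R LO LM c (\<lambda>x. cComp C (\<pi> x) e)"
proof -
  have c: "c \<in> cObj C" and e: "e \<in> hom C c P" and se: "cComp C s e = cComp C t e"
    using eq by (simp_all add: is_equalizer_def)
  then have w: "is_wedge A E M C FO FM R LO LM c (\<lambda>x. cComp C (\<pi> x) e)"
    using is_wedge_comp_proj_iff by blast
  have "tup c (\<lambda>x. cComp C (\<pi> x) e) = e"
    by (rule tuple_unique[OF catC prodP e]) (rule refl)
  then show ?thesis using is_end_iff_is_equalizer_tuple[OF w] eq by simp
qed

lemma wedge_cat_eq:
  "wedge_cat A E M C FO FM R LO LM =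
     structured_cat C {w. is_wedge A E M C FO FM R LO LM (fst w) (snd w) \<and> snd w \<in> extensional (cObj R)}
       (\<lambda>u v h. \<forall>x\<in>cObj R. cComp C (snd v x) h = snd u x)"
  by (simp add: wedge_cat_def structured_cat_def Let_def)

lemma cone_cat_eq:
  "cone_cat C P s t =
     structured_cat C {u. fst u \<in> cObj C \<and> snd u \<in> hom C (fst u) P \<and> cComp C s (snd u) = cComp C t (snd u)}
       (\<lambda>u v h. cComp C (snd v) h = snd u)"
  by (simp add: cone_cat_def structured_cat_def Let_def)

lemma category_wedge_cat: "category (wedge_cat A E M C FO FM R LO LM)"
  unfolding wedge_cat_eq
proof (rule category_structured_cat[OF catC])
  fix u assume "u \<in> {w. is_wedge A E M C FO FM R LO LM (fst w) (snd w) \<and> snd w \<in> extensional (cObj R)}"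
  then have w: "is_wedge A E M C FO FM R LO LM (fst u) (snd u)" by simp
  then show "fst u \<in> cObj C" by (simp add: is_wedge_def)
  show "\<forall>x\<in>cObj R. cComp C (snd u x) (cId C (fst u)) = snd u x"
    using w cat_id_right[OF catC] unfolding is_wedge_def by blast
next
  fix u v w h k
  assume "w \<in> {w. is_wedge A E M C FO FM R LO LM (fst w) (snd w) \<and> snd w \<in> extensional (cObj R)}"
    and h: "h \<in> hom C (fst u) (fst v)" and k: "k \<in> hom C (fst v) (fst w)"
    and hu: "\<forall>x\<in>cObj R. cComp C (snd v x) h = snd u x"
    and kv: "\<forall>x\<in>cObj R. cComp C (snd w x) k = snd v x"
  then have "cComp C (snd w x) (cComp C k h) = snd u x" if "x \<in> cObj R" for x
    using that cat_comp_assoc[OF catC h k, of "snd w x" "FO (LO x)"] by (simp add: is_wedge_def)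
  then show "\<forall>x\<in>cObj R. cComp C (snd w x) (cComp C k h) = snd u x" ..
qed

lemma category_cone_cat: "category (cone_cat C P s t)"
  unfolding cone_cat_eq
  by (rule category_structured_cat[OF catC]) (auto simp: cat_id_right[OF catC] cat_comp_assoc[OF catC])

lemma bij_betw_wedges_cones:
  "bij_betw (\<lambda>(c, \<eta>). (c, tup c \<eta>))
     {w. is_wedge A E M C FO FM R LO LM (fst w) (snd w) \<and> snd w \<in> extensional (cObj R)}
     {u. fst u \<in> cObj C \<and> snd u \<in> hom C (fst u) P \<and> cComp C s (snd u) = cComp C t (snd u)}"
proof -
  have wedge_to_cone: "c \<in> cObj C \<and> tup c \<eta> \<in> hom C c P
      \<and> cComp C s (tup c \<eta>) = cComp C t (tup c \<eta>) \<and> (\<lambda>x\<in>cObj R. cComp C (\<pi> x) (tup c \<eta>)) = \<eta>"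
    if w: "is_wedge A E M C FO FM R LO LM c \<eta>" and ext: "\<eta> \<in> extensional (cObj R)" for c \<eta>
    using w is_wedge_tuple[OF w] ext by (auto simp: is_wedge_def extensional_def)
  have cone_to_wedge: "is_wedge A E M C FO FM R LO LM c (\<lambda>x\<in>cObj R. cComp C (\<pi> x) e)
      \<and> tup c (\<lambda>x\<in>cObj R. cComp C (\<pi> x) e) = e"
    if c: "c \<in> cObj C" and e: "e \<in> hom C c P" and se: "cComp C s e = cComp C t e" for c e
    using is_wedge_comp_proj_iff[OF c e] se is_wedge_cong[of "\<lambda>x\<in>cObj R. cComp C (\<pi> x) e"]
      tuple_unique[OF catC prodP e, of "\<lambda>x\<in>cObj R. cComp C (\<pi> x) e"] by simp
  show ?thesis
    by (rule bij_betw_byWitness[where f' = "\<lambda>(c, e). (c, \<lambda>x\<in>cObj R. cComp C (\<pi> x) e)"])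
      (use wedge_to_cone cone_to_wedge in auto)
qed

lemma iso_functor_wedge_cat_cone_cat:
  "iso_functor (wedge_cat A E M C FO FM R LO LM) (cone_cat C P s t)
     (\<lambda>(c, \<eta>). (c, tup c \<eta>))
     (\<lambda>(u, v, h). ((fst u, tup (fst u) (snd u)), (fst v, tup (fst v) (snd v)), h))"
proof -
  have adm: "cComp C (tup (fst v) (snd v)) h = tup (fst u) (snd u) \<longleftrightarrow>
      (\<forall>x\<in>cObj R. cComp C (snd v x) h = snd u x)"
    if "is_wedge A E M C FO FM R LO LM (fst u) (snd u)"
      and "is_wedge A E M C FO FM R LO LM (fst v) (snd v)" and "h \<in> hom C (fst u) (fst v)" for u v h
    using tuple_comp_eq_iff[OF that(2,3) is_wedge_tuple(1)[OF that(1)]] is_wedge_tuple(2)[OF that(1)]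
    by simp
  have "iso_functor (wedge_cat A E M C FO FM R LO LM) (cone_cat C P s t) (\<lambda>(c, \<eta>). (c, tup c \<eta>))
     (\<lambda>(u, v, h). ((\<lambda>(c, \<eta>). (c, tup c \<eta>)) u, (\<lambda>(c, \<eta>). (c, tup c \<eta>)) v, h))"
    using category_wedge_cat category_cone_cat bij_betw_wedges_cones adm
    unfolding wedge_cat_eq cone_cat_eq by (intro iso_functor_structured_cat) auto
  then show ?thesis by (simp add: case_prod_beta)
qed

end

theorem mainTheorem4:
  fixes A :: "('a, 'f) cat" and E M :: "'f set"
    and C :: "('c, 'g) cat" and FO :: "'a \<Rightarrow> 'c" and FM :: "'f \<Rightarrow> 'g"
    and R :: "('r, 'h) cat" and LO :: "'r \<Rightarrow> 'a" and LM :: "'h \<Rightarrow> 'f"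
    and P Q :: 'c and \<pi> :: "'r \<Rightarrow> 'g" and \<rho> :: "'h \<Rightarrow> 'g" and s t :: 'g
  assumes F: "var_functor A E M C FO FM"
    and L: "cfunctor R A LO LM"
    and prodP: "is_product C (cObj R) P \<pi> (\<lambda>x. FO (LO x))"
    and prodQ: "is_product C (cArr R) Q \<rho> (\<lambda>f. FO (tgt A E M (LM f)))"
    and s: "s \<in> hom C P Q" and t: "t \<in> hom C P Q"
    and s_comp: "\<forall>f\<in>cArr R. cComp C (\<rho> f) s = cComp C (FM (up_e A E M (LM f))) (\<pi> (cDom R f))"
    and t_comp: "\<forall>f\<in>cArr R. cComp C (\<rho> f) t = cComp C (FM (up_m A E M (LM f))) (\<pi> (cCod R f))"
  shows
    "iso_functor (wedge_cat A E M C FO FM R LO LM) (cone_cat C P s t)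
        (\<lambda>(c, \<eta>). (c, tuple C (cObj R) P \<pi> c \<eta>))
        (\<lambda>(u, v, h). ((fst u, tuple C (cObj R) P \<pi> (fst u) (snd u)),
                      (fst v, tuple C (cObj R) P \<pi> (fst v) (snd v)), h))
     \<and> ((\<exists>c \<eta>. is_end A E M C FO FM R LO LM c \<eta>) \<longleftrightarrow> (\<exists>c e. is_equalizer C P s t c e))
     \<and> (\<forall>c \<eta>. is_end A E M C FO FM R LO LM c \<eta> \<longrightarrow>
           is_equalizer C P s t c (tuple C (cObj R) P \<pi> c \<eta>))
     \<and> (\<forall>c e. is_equalizer C P s t c e \<longrightarrow>
           is_end A E M C FO FM R LO LM c (\<lambda>x. cComp C (\<pi> x) e))"
proof -
  interpret wedges_as_cones A E M C FO FM R LO LM P Q \<pi> \<rho> s t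
    using assms by unfold_locales
  have end_equalizer: "is_equalizer C P s t c (tuple C (cObj R) P \<pi> c \<eta>)"
    if "is_end A E M C FO FM R LO LM c \<eta>" for c \<eta>
    using that is_end_iff_is_equalizer_tuple[of c \<eta>] unfolding is_end_def by blast
  show ?thesis
    using iso_functor_wedge_cat_cone_cat end_equalizer is_end_comp_proj by blast
qed

end
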